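(* Let $f,g:\mathbb{R}^n\to\mathbb{R}$ satisfy assumptions (A1)–(A4) below, let $\zeta\in[0,1)$ be fixed and $x_0\in\Omega=\{x:g(x)\le0\}$. Then the constraint function $g$ decreases along the trajectory $x(t;\zeta,x_0)$ outside the neighborhood $\Theta_\zeta$, and increases along it inside $\Theta_\zeta$, where $\Theta_\zeta=\{x:\cos\theta(x)<-\zeta,\ x\in\Omega_{f(x_0)}\}$.
   Context: Assumptions: (A1) $\lim_{|x|\to\infty} f(x)=+\infty$; (A2) $\nabla f(x)\neq 0$ for all $x\in\Omega$; (A3) $\nabla g(x)\neq 0$ for all $x\in\Omega$; (A4) $f,g$ twice continuously differentiable. $\cos\theta(x)=\frac{\langle\nabla f(x),\nabla g(x)\rangle}{|\nabla f(x)||\nabla g(x)|}$; $\Omega_{f(x_0)}=\{x: f(x)\le f(x_0),\ g(x)\le 0\}$. For $\zeta\in[0,1)$, $\mathbf{s}_\zeta(x)=-\frac{\nabla f(x)}{|\nabla f(x)|}-\zeta\frac{\nabla g(x)}{|\nabla g(x)|}$, and $x(t;\zeta,x_0)$ is the solution of $\frac{dx}{dt}=\mathbf{s}_\zeta(x)$, $x(0)=x_0$, on its maximal interval of existence in $E=\{x:\nabla f(x)\ne0,\nabla g(x)\ne0\}$. *)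

theory Defs
  imports "HOL-Analysis.Analysis"
begin

text \<open>Gradients are passed explicitly as functions Df, Dg with
  (f has_derivative (\<lambda>h. Df x \<bullet> h)) (at x).\<close>

definition cos_theta :: "('a::real_inner \<Rightarrow> 'a) \<Rightarrow> ('a \<Rightarrow> 'a) \<Rightarrow> 'a \<Rightarrow> real" where
  "cos_theta Df Dg x = (Df x \<bullet> Dg x) / (norm (Df x) * norm (Dg x))"

definition s_field :: "('a::real_normed_vector \<Rightarrow> 'a) \<Rightarrow> ('a \<Rightarrow> 'a) \<Rightarrow> real \<Rightarrow> 'a \<Rightarrow> 'a" where
  "s_field Df Dg \<zeta> x = - ((1 / norm (Df x)) *\<^sub>R Df x) - (\<zeta> / norm (Dg x)) *\<^sub>R Dg x"

definition E_set :: "('a::real_normed_vector \<Rightarrow> 'a) \<Rightarrow> ('a \<Rightarrow> 'a) \<Rightarrow> 'a set" where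
  "E_set Df Dg = {x. Df x \<noteq> 0 \<and> Dg x \<noteq> 0}"

definition solves_on :: "('a::real_normed_vector \<Rightarrow> 'a) \<Rightarrow> 'a set \<Rightarrow> 'a \<Rightarrow> real set \<Rightarrow> (real \<Rightarrow> 'a) \<Rightarrow> bool" where
  "solves_on s E x0 T x \<longleftrightarrow> is_interval T \<and> open T \<and> 0 \<in> T \<and> x 0 = x0 \<and>
     (\<forall>t\<in>T. x t \<in> E \<and> (x has_vector_derivative s (x t)) (at t))"

definition maximal_solution :: "('a::real_normed_vector \<Rightarrow> 'a) \<Rightarrow> 'a set \<Rightarrow> 'a \<Rightarrow> real set \<Rightarrow> (real \<Rightarrow> 'a) \<Rightarrow> bool" where
  "maximal_solution s E x0 T x \<longleftrightarrow> solves_on s E x0 T x \<and>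
     (\<forall>T' y. solves_on s E x0 T' y \<and> T \<subseteq> T' \<and> (\<forall>t\<in>T. y t = x t) \<longrightarrow> T' = T)"

definition Omega_lev :: "('a \<Rightarrow> real) \<Rightarrow> ('a \<Rightarrow> real) \<Rightarrow> 'a \<Rightarrow> 'a set" where
  "Omega_lev f g x0 = {x. f x \<le> f x0 \<and> g x \<le> 0}"

definition Theta :: "('a \<Rightarrow> real) \<Rightarrow> ('a \<Rightarrow> real) \<Rightarrow> ('a::real_inner \<Rightarrow> 'a) \<Rightarrow> ('a \<Rightarrow> 'a) \<Rightarrow> real \<Rightarrow> 'a \<Rightarrow> 'a set" where
  "Theta f g Df Dg \<zeta> x0 = {x. cos_theta Df Dg x < - \<zeta> \<and> x \<in> Omega_lev f g x0}"

end

theory Submission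
  imports Defs
begin

(* By the chain rule, d/dt g(x(t)) = <grad g, s_zeta> = -|grad g| (cos theta + zeta) along the
   trajectory, so its sign is that of -(cos theta + zeta): positive exactly where cos theta < -zeta. *)

lemma inner_s_field:
  fixes Df Dg :: "'a::real_inner \<Rightarrow> 'a"
  assumes "Df y \<noteq> 0" "Dg y \<noteq> 0"
  shows "Dg y \<bullet> s_field Df Dg \<zeta> y = - norm (Dg y) * (cos_theta Df Dg y + \<zeta>)"
proof -
  have "Dg y \<bullet> s_field Df Dg \<zeta> y
      = - (Dg y \<bullet> Df y) / norm (Df y) - \<zeta> / norm (Dg y) * (Dg y \<bullet> Dg y)"
    unfolding s_field_def by (simp add: inner_diff_right)
  also have "\<dots> = - norm (Dg y) * (cos_theta Df Dg y + \<zeta>)"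
    using assms unfolding cos_theta_def
    by (simp add: field_simps power2_eq_square inner_commute flip: power2_norm_eq_inner)
  finally show ?thesis .
qed

lemma has_real_derivative_comp_gradient:
  fixes g :: "'a::real_inner \<Rightarrow> real" and x :: "real \<Rightarrow> 'a"
  assumes "(g has_derivative (\<lambda>h. G \<bullet> h)) (at (x t))"
    and "(x has_vector_derivative v) (at t)"
  shows "((g \<circ> x) has_real_derivative G \<bullet> v) (at t)"
proof -
  have "((g \<circ> x) has_derivative (\<lambda>h. G \<bullet> (h *\<^sub>R v))) (at t)"
    using diff_chain_at[OF assms(2)[unfolded has_vector_derivative_def] assms(1)]
    by (simp add: comp_def)
  then show ?thesis
    by (simp add: has_field_derivative_def mult_commute_abs)
qed

lemma constraint_derivative_along_solution:
  fixes g :: "'a::real_inner \<Rightarrow> real"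
  assumes g_deriv: "\<And>y. (g has_derivative (\<lambda>h. Dg y \<bullet> h)) (at y)"
    and sol: "solves_on (s_field Df Dg \<zeta>) (E_set Df Dg) x0 T x"
    and "t \<in> T"
  shows "((g \<circ> x) has_real_derivative - norm (Dg (x t)) * (cos_theta Df Dg (x t) + \<zeta>)) (at t)"
proof -
  have "x t \<in> E_set Df Dg" and x_deriv: "(x has_vector_derivative s_field Df Dg \<zeta> (x t)) (at t)"
    using sol \<open>t \<in> T\<close> unfolding solves_on_def by auto
  then have "Df (x t) \<noteq> 0" "Dg (x t) \<noteq> 0"
    by (auto simp: E_set_def)
  then show ?thesis
    using has_real_derivative_comp_gradient[OF g_deriv x_deriv] by (simp add: inner_s_field)
qed

theorem lemma5p6:
  fixes f g :: "real ^ 'n \<Rightarrow> real"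
    and Df Dg :: "real ^ 'n \<Rightarrow> real ^ 'n"
    and D2f D2g :: "real ^ 'n \<Rightarrow> ((real ^ 'n) \<Rightarrow>\<^sub>L (real ^ 'n))"
    and \<zeta> :: real and x0 :: "real ^ 'n"
    and T :: "real set" and x :: "real \<Rightarrow> real ^ 'n"
  assumes A1: "filterlim f at_top at_infinity"
    and A2: "\<And>y. g y \<le> 0 \<Longrightarrow> Df y \<noteq> 0"
    and A3: "\<And>y. g y \<le> 0 \<Longrightarrow> Dg y \<noteq> 0"
    and A4f1: "\<And>y. (f has_derivative (\<lambda>h. Df y \<bullet> h)) (at y)"
    and A4f2: "\<And>y. (Df has_derivative blinfun_apply (D2f y)) (at y)"
    and A4f3: "continuous_on UNIV D2f"
    and A4g1: "\<And>y. (g has_derivative (\<lambda>h. Dg y \<bullet> h)) (at y)"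
    and A4g2: "\<And>y. (Dg has_derivative blinfun_apply (D2g y)) (at y)"
    and A4g3: "continuous_on UNIV D2g"
    and zeta: "0 \<le> \<zeta>" "\<zeta> < 1"
    and x0: "g x0 \<le> 0"
    and traj: "maximal_solution (s_field Df Dg \<zeta>) (E_set Df Dg) x0 T x"
  shows "\<forall>t\<in>T.
     (x t \<in> Theta f g Df Dg \<zeta> x0 \<longrightarrow>
        (\<exists>D. ((g \<circ> x) has_real_derivative D) (at t) \<and> D > 0)) \<and>
     (x t \<in> Omega_lev f g x0 - Theta f g Df Dg \<zeta> x0 \<longrightarrow>
        (\<exists>D. ((g \<circ> x) has_real_derivative D) (at t) \<and> D \<le> 0))"
proof (intro ballI conjI impI)
  fix t assume "t \<in> T"
  define D where "D = - norm (Dg (x t)) * (cos_theta Df Dg (x t) + \<zeta>)"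
  have sol: "solves_on (s_field Df Dg \<zeta>) (E_set Df Dg) x0 T x"
    using traj unfolding maximal_solution_def by blast
  have deriv: "((g \<circ> x) has_real_derivative D) (at t)"
    unfolding D_def using constraint_derivative_along_solution[OF A4g1 sol \<open>t \<in> T\<close>] .
  have "Dg (x t) \<noteq> 0"
    using sol \<open>t \<in> T\<close> by (auto simp: solves_on_def E_set_def)
  {
    assume "x t \<in> Theta f g Df Dg \<zeta> x0"
    then have "cos_theta Df Dg (x t) + \<zeta> < 0" by (auto simp: Theta_def)
    then have "D > 0" unfolding D_def using \<open>Dg (x t) \<noteq> 0\<close> by (simp add: mult_pos_neg)
    then show "\<exists>D. ((g \<circ> x) has_real_derivative D) (at t) \<and> D > 0" using deriv by blast
  next
    assume "x t \<in> Omega_lev f g x0 - Theta f g Df Dg \<zeta> x0"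
    then have "cos_theta Df Dg (x t) + \<zeta> \<ge> 0" by (auto simp: Theta_def)
    then have "D \<le> 0" unfolding D_def by simp
    then show "\<exists>D. ((g \<circ> x) has_real_derivative D) (at t) \<and> D \<le> 0" using deriv by blast
  }
qed

end
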